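(* Let $\mathbb{T}$ be a partial tableau and let $n$ be an internal node of $\mathbb{T}$. If every child of $n$ is valid, then $n$ is valid.
   Context: Fix a set $\Sigma$ and a countably infinite set $\mathrm{Var}$ of propositional variables. An LTS is $\mathcal T=(\mathcal S,\to)$ with ${\to}\subseteq\mathcal S\times\Sigma\times\mathcal S$; for $K\subseteq\Sigma$ write $s\xrightarrow{K}s'$ if $s\xrightarrow{a}s'$ for some $a\in K$. A valuation is $\mathcal V:\mathrm{Var}\to 2^{\mathcal S}$. Formulas: $\Phi::=Z\mid\neg\Phi\mid\Phi_1\wedge\Phi_2\mid[K]\Phi\mid\nu Z.\Phi$ ($K\subseteq\Sigma$, $Z\in\mathrm{Var}$), well-formed if in each subformula $\nu Z.\Phi$ every free occurrence of $Z$ in $\Phi$ is under an even number of negations. Derived: $\Phi_1\vee\Phi_2=\neg(\neg\Phi_1\wedge\neg\Phi_2)$, $\langle K\rangle\Phi=\neg[K]\neg\Phi$, $\mu Z.\Phi=\neg\nu Z.\neg\Phi[Z:=\neg Z]$. Semantics: $[\![Z]\!]_{\mathcal V}=\mathcal V(Z)$, $[\![\neg\Phi]\!]_{\mathcal V}=\mathcal S\setminus[\![\Phi]\!]_{\mathcal V}$, $[\![\Phi_1\wedge\Phi_2]\!]_{\mathcal V}=[\![\Phi_1]\!]_{\mathcal V}\cap[\![\Phi_2]\!]_{\mathcal V}$, $[\![[K]\Phi]\!]_{\mathcal V}=\{s\mid\forall s'.\ s\xrightarrow{K}s'\Rightarrow s'\in[\![\Phi]\!]_{\mathcal V}\}$,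 $[\![\nu Z.\Phi]\!]_{\mathcal V}=\bigcup\{S'\subseteq\mathcal S\mid S'\subseteq[\![\Phi]\!]_{\mathcal V[Z:=S']}\}$. A formula is in positive normal form if built from $Z,\neg Z,\wedge,\vee,[K],\langle K\rangle,\nu,\mu$ (negation only on variables). Substitution is capture-free. A definition list is a finite sequence $\Delta=(U_1=\Phi_1)\cdots(U_n=\Phi_n)$ of distinct $U_i\in\mathrm{Var}$ and formulas $\Phi_i$ such that no $U_i$ occurs bound in any $\Phi_j$ and $U_j$ is not free in $\Phi_i$ when $i\le j$; $\Delta(U_i)=\Phi_i$, $\mathrm{dom}(\Delta)=\{U_1,\dots,U_n\}$. Valuation extension: $\mathcal V[\varepsilon]=\mathcal V$, $\mathcal V[(U=\Phi)\cdot\Delta]=(\mathcal V[U:=[\![\Phi]\!]_{\mathcal V}])[\Delta]$. A sequent $S\vdash^{\mathcal T}_{\mathcal V,\Delta}\Phi$ consists of $S\subseteq\mathcal S$, a definition list $\Delta$ and a formula $\Phi$ in positive normal form in which every $U\in\mathrm{dom}(\Delta)$ is positive and not bound; its semantics is $[\![\Phi]\!]_{\mathcal V[\Delta]}$, and it is valid iff $S\subseteq[\![\Phi]\!]_{\mathcal V[\Delta]}$. Proof rules (conclusion; premises in order), all with the same $\mathcal T,\mathcal V$: ($\wedge$) $S\vdash_\Delta\Phi_1\wedge\Phi_2$; $S\vdash_\Delta\Phi_1$, $S\vdash_\Delta\Phi_2$. ($\vee$) $S\vdash_\Delta\Phi_1\vee\Phi_2$; $S_1\vdash_\Delta\Phi_1$,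 $S_2\vdash_\Delta\Phi_2$ where $S=S_1\cup S_2$. ($[K]$) $S\vdash_\Delta[K]\Phi$; $S'\vdash_\Delta\Phi$ with $S'=\{s'\mid\exists s\in S.\ s\xrightarrow{K}s'\}$. ($\langle K\rangle$, with witness function $f:S\to\mathcal S$ such that $s\xrightarrow{K}f(s)$ for all $s\in S$) $S\vdash_\Delta\langle K\rangle\Phi$; $f(S)\vdash_\Delta\Phi$. ($\sigma Z$, $\sigma\in\{\mu,\nu\}$) $S\vdash_\Delta\sigma Z.\Phi$; $S\vdash_{\Delta\cdot(U=\sigma Z.\Phi)}U$ with $U$ fresh (not used elsewhere in the tree). (Un) $S\vdash_\Delta U$; $S\vdash_\Delta\Phi[Z:=U]$ where $\Delta(U)=\sigma Z.\Phi$. (Thin) $S\vdash_\Delta\Phi$; $S'\vdash_\Delta\Phi$ where $S\subseteq S'$. A partial tableau is a finite nonempty ordered tree whose nodes are labelled by sequents over fixed $\mathcal T,\mathcal V$, where every internal node is labelled by a rule application (a rule name, together with a witness function in the case of $\langle K\rangle$) such that the node's sequent and its children's sequents (in order) form an instance of that rule, and leaves carry no rule application. A node is valid iff its sequent is valid. *)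

theory Defs
  imports Main
begin

type_synonym var = nat

datatype 'a fm =
    FVar var
  | FNeg "'a fm"
  | FAnd "'a fm" "'a fm"
  | FBox "'a set" "'a fm"
  | FNu var "'a fm"

(* It is capture-free in all uses below: for [Z := neg Z] trivially, and for
   [Z := U] because definition lists forbid U to occur bound. *)
primrec subst :: "'a fm \<Rightarrow> var \<Rightarrow> 'a fm \<Rightarrow> 'a fm" where
  "subst (FVar X) Z t = (if X = Z then t else FVar X)"
| "subst (FNeg p) Z t = FNeg (subst p Z t)"
| "subst (FAnd p q) Z t = FAnd (subst p Z t) (subst q Z t)"
| "subst (FBox K p) Z t = FBox K (subst p Z t)"
| "subst (FNu X p) Z t = (if X = Z then FNu X p else FNu X (subst p Z t))"

definition f_or :: "'a fm \<Rightarrow> 'a fm \<Rightarrow> 'a fm" where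
  "f_or p q = FNeg (FAnd (FNeg p) (FNeg q))"

definition f_dia :: "'a set \<Rightarrow> 'a fm \<Rightarrow> 'a fm" where
  "f_dia K p = FNeg (FBox K (FNeg p))"

definition f_mu :: "var \<Rightarrow> 'a fm \<Rightarrow> 'a fm" where
  "f_mu Z p = FNeg (FNu Z (FNeg (subst p Z (FNeg (FVar Z)))))"

primrec fvars :: "'a fm \<Rightarrow> var set" where
  "fvars (FVar X) = {X}"
| "fvars (FNeg p) = fvars p"
| "fvars (FAnd p q) = fvars p \<union> fvars q"
| "fvars (FBox K p) = fvars p"
| "fvars (FNu X p) = fvars p - {X}"

primrec bvars :: "'a fm \<Rightarrow> var set" where
  "bvars (FVar X) = {}"
| "bvars (FNeg p) = bvars p"
| "bvars (FAnd p q) = bvars p \<union> bvars q"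
| "bvars (FBox K p) = bvars p"
| "bvars (FNu X p) = insert X (bvars p)"

primrec allvars :: "'a fm \<Rightarrow> var set" where
  "allvars (FVar X) = {X}"
| "allvars (FNeg p) = allvars p"
| "allvars (FAnd p q) = allvars p \<union> allvars q"
| "allvars (FBox K p) = allvars p"
| "allvars (FNu X p) = insert X (allvars p)"

primrec parity_ok :: "bool \<Rightarrow> var \<Rightarrow> 'a fm \<Rightarrow> bool" where
  "parity_ok b Z (FVar X) = (X = Z \<longrightarrow> b)"
| "parity_ok b Z (FNeg p) = parity_ok (\<not> b) Z p"
| "parity_ok b Z (FAnd p q) = (parity_ok b Z p \<and> parity_ok b Z q)"
| "parity_ok b Z (FBox K p) = parity_ok b Z p"
| "parity_ok b Z (FNu X p) = (X = Z \<or> parity_ok b Z p)"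

abbreviation positive :: "var \<Rightarrow> 'a fm \<Rightarrow> bool" where
  "positive Z p \<equiv> parity_ok True Z p"

primrec wf_fm :: "'a fm \<Rightarrow> bool" where
  "wf_fm (FVar X) = True"
| "wf_fm (FNeg p) = wf_fm p"
| "wf_fm (FAnd p q) = (wf_fm p \<and> wf_fm q)"
| "wf_fm (FBox K p) = wf_fm p"
| "wf_fm (FNu Z p) = (positive Z p \<and> wf_fm p)"

inductive pnf :: "'a fm \<Rightarrow> bool" where
  pnf_var: "pnf (FVar Z)"
| pnf_negvar: "pnf (FNeg (FVar Z))"
| pnf_and: "pnf p \<Longrightarrow> pnf q \<Longrightarrow> pnf (FAnd p q)"
| pnf_or: "pnf p \<Longrightarrow> pnf q \<Longrightarrow> pnf (f_or p q)"
| pnf_box: "pnf p \<Longrightarrow> pnf (FBox K p)"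
| pnf_dia: "pnf p \<Longrightarrow> pnf (f_dia K p)"
| pnf_nu: "pnf p \<Longrightarrow> pnf (FNu Z p)"
| pnf_mu: "pnf p \<Longrightarrow> pnf (f_mu Z p)"

type_synonym ('s, 'a) lts = "('s \<times> 'a \<times> 's) set"

definition stepK :: "('s, 'a) lts \<Rightarrow> 's \<Rightarrow> 'a set \<Rightarrow> 's \<Rightarrow> bool" where
  "stepK T s K s' = (\<exists>a\<in>K. (s, a, s') \<in> T)"

primrec sem :: "('s, 'a) lts \<Rightarrow> (var \<Rightarrow> 's set) \<Rightarrow> 'a fm \<Rightarrow> 's set" where
  "sem T V (FVar Z) = V Z"
| "sem T V (FNeg p) = UNIV - sem T V p"
| "sem T V (FAnd p q) = sem T V p \<inter> sem T V q"
| "sem T V (FBox K p) = {s. \<forall>s'. stepK T s K s' \<longrightarrow> s' \<in> sem T V p}"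
| "sem T V (FNu Z p) = \<Union> {S'. S' \<subseteq> sem T (V(Z := S')) p}"

type_synonym 'a deflist = "(var \<times> 'a fm) list"

definition wf_deflist :: "'a deflist \<Rightarrow> bool" where
  "wf_deflist D \<longleftrightarrow>
     distinct (map fst D)
   \<and> (\<forall>(U, p) \<in> set D. wf_fm p)
   \<and> (\<forall>i < length D. \<forall>j < length D. fst (D ! i) \<notin> bvars (snd (D ! j)))
   \<and> (\<forall>i < length D. \<forall>j < length D. i \<le> j \<longrightarrow> fst (D ! j) \<notin> fvars (snd (D ! i)))"

primrec ext_val :: "('s, 'a) lts \<Rightarrow> (var \<Rightarrow> 's set) \<Rightarrow> 'a deflist \<Rightarrow> (var \<Rightarrow> 's set)" where
  "ext_val T V [] = V"
| "ext_val T V (d # D) = ext_val T (V(fst d := sem T V (snd d))) D"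

(* sequents S |-_D Phi *)
type_synonym ('s, 'a) sequent = "'s set \<times> 'a deflist \<times> 'a fm"

definition is_sequent :: "('s, 'a) sequent \<Rightarrow> bool" where
  "is_sequent sq \<longleftrightarrow> (case sq of (S, D, p) \<Rightarrow>
      wf_deflist D \<and> wf_fm p \<and> pnf p
    \<and> (\<forall>U \<in> set (map fst D). positive U p \<and> U \<notin> bvars p))"

definition valid_seq :: "('s, 'a) lts \<Rightarrow> (var \<Rightarrow> 's set) \<Rightarrow> ('s, 'a) sequent \<Rightarrow> bool" where
  "valid_seq T V sq \<longleftrightarrow> (case sq of (S, D, p) \<Rightarrow> S \<subseteq> sem T (ext_val T V D) p)"

definition seq_vars :: "('s, 'a) sequent \<Rightarrow> var set" where
  "seq_vars sq = (case sq of (S, D, p) \<Rightarrow>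
      allvars p \<union> set (map fst D) \<union> (\<Union>(U, q) \<in> set D. allvars q))"

(* proof rules; the diamond rule carries its witness function *)
datatype 's rule = RAnd | ROr | RBox | RDia "'s \<Rightarrow> 's" | RSigma | RUn | RThin

fun rule_inst :: "('s, 'a) lts \<Rightarrow> 's rule \<Rightarrow> ('s, 'a) sequent \<Rightarrow> ('s, 'a) sequent list \<Rightarrow> bool" where
  "rule_inst T RAnd (S, D, phi) prems =
     (\<exists>p q. phi = FAnd p q \<and> prems = [(S, D, p), (S, D, q)])"
| "rule_inst T ROr (S, D, phi) prems =
     (\<exists>p q S1 S2. phi = f_or p q \<and> S = S1 \<union> S2 \<and> prems = [(S1, D, p), (S2, D, q)])"
| "rule_inst T RBox (S, D, phi) prems =
     (\<exists>K p. phi = FBox K p \<and> prems = [({s'. \<exists>s\<in>S. stepK T s K s'}, D, p)])"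
| "rule_inst T (RDia f) (S, D, phi) prems =
     (\<exists>K p. phi = f_dia K p \<and> (\<forall>s\<in>S. stepK T s K (f s)) \<and> prems = [(f ` S, D, p)])"
| "rule_inst T RSigma (S, D, phi) prems =
     (\<exists>Z p U. (phi = FNu Z p \<or> phi = f_mu Z p) \<and> prems = [(S, D @ [(U, phi)], FVar U)])"
| "rule_inst T RUn (S, D, phi) prems =
     (\<exists>U Z p. phi = FVar U \<and> (map_of D U = Some (FNu Z p) \<or> map_of D U = Some (f_mu Z p))
              \<and> prems = [(S, D, subst p Z (FVar U))])"
| "rule_inst T RThin (S, D, phi) prems =
     (\<exists>S'. S \<subseteq> S' \<and> prems = [(S', D, phi)])"

datatype ('s, 'a) tableau = Node "('s, 'a) sequent" "'s rule option" "('s, 'a) tableau list"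

primrec label :: "('s, 'a) tableau \<Rightarrow> ('s, 'a) sequent" where
  "label (Node sq r cs) = sq"

primrec rule_of :: "('s, 'a) tableau \<Rightarrow> 's rule option" where
  "rule_of (Node sq r cs) = r"

primrec children :: "('s, 'a) tableau \<Rightarrow> ('s, 'a) tableau list" where
  "children (Node sq r cs) = cs"

fun node_at :: "('s, 'a) tableau \<Rightarrow> nat list \<Rightarrow> ('s, 'a) tableau option" where
  "node_at t [] = Some t"
| "node_at (Node sq r cs) (i # p) = (if i < length cs then node_at (cs ! i) p else None)"

definition positions :: "('s, 'a) tableau \<Rightarrow> nat list set" where
  "positions t = {p. node_at t p \<noteq> None}"

definition internal :: "('s, 'a) tableau \<Rightarrow> bool" where
  "internal n \<longleftrightarrow> rule_of n \<noteq> None"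

fun locally_ok :: "('s, 'a) lts \<Rightarrow> ('s, 'a) tableau \<Rightarrow> bool" where
  "locally_ok T (Node sq None cs) = (is_sequent sq \<and> cs = [])"
| "locally_ok T (Node sq (Some r) cs) =
     (is_sequent sq \<and> rule_inst T r sq (map label cs))"

(* freshness: the variable U introduced by a sigma-rule at position p
   (it is the last defined variable of the child at p @ [0]) is not used in
   any node outside the subtree rooted at that child *)
definition sigma_fresh :: "('s, 'a) tableau \<Rightarrow> bool" where
  "sigma_fresh t \<longleftrightarrow>
     (\<forall>p n c. node_at t p = Some n \<longrightarrow> rule_of n = Some RSigma \<longrightarrow>
        node_at t (p @ [0]) = Some c \<longrightarrow>
        (\<forall>U. label c = (fst (label c), fst (snd (label c)), FVar U) \<longrightarrow>
           (\<forall>q m. node_at t q = Some m \<longrightarrow> \<not> (\<exists>r. q = p @ [0] @ r) \<longrightarrow>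
                  U \<notin> seq_vars (label m))))"

(* partial tableau over fixed T and V (V plays no role in the syntactic conditions) *)
definition partial_tableau :: "('s, 'a) lts \<Rightarrow> ('s, 'a) tableau \<Rightarrow> bool" where
  "partial_tableau T t \<longleftrightarrow>
     (\<forall>p n. node_at t p = Some n \<longrightarrow> locally_ok T n) \<and> sigma_fresh t"

definition valid_node :: "('s, 'a) lts \<Rightarrow> (var \<Rightarrow> 's set) \<Rightarrow> ('s, 'a) tableau \<Rightarrow> bool" where
  "valid_node T V n \<longleftrightarrow> valid_seq T V (label n)"

end

theory Submission
  imports Defs
begin

text \<open>Every rule except unfolding is sound for purely set-theoretic reasons. For unfolding,
  the extended valuation gives \<open>U\<close> the meaning of its defining formula \<open>\<sigma>Z.\<Phi>\<close>;
  positivity of \<open>Z\<close> makes \<open>\<Phi>\<close> monotone in \<open>Z\<close>, so by Knaster-Tarski this meaning is a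
  fixed point of \<open>\<Phi>\<close>, and the substitution lemma identifies \<open>\<Phi>[Z:=U]\<close> with \<open>\<Phi>\<close>
  evaluated at that fixed point.\<close>

lemma sem_cong_fvars:
  "\<forall>x\<in>fvars p. V x = W x \<Longrightarrow> sem T V p = sem T W p"
proof (induction p arbitrary: V W)
  case (FNeg q)
  from FNeg.prems have "sem T V q = sem T W q" by (intro FNeg.IH) simp
  then show ?case by simp
next
  case (FAnd q r)
  from FAnd.prems have "sem T V q = sem T W q" and "sem T V r = sem T W r"
    by (intro FAnd.IH; simp)+
  then show ?case by simp
next
  case (FBox K q)
  from FBox.prems have "sem T V q = sem T W q" by (intro FBox.IH) simp
  then show ?case by simp
next
  case (FNu X q)
  have "sem T (V(X := S')) q = sem T (W(X := S')) q" for S'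
    using FNu.prems by (intro FNu.IH) auto
  then show ?case by simp
qed simp

lemma sem_parity_mono:
  assumes "parity_ok b Z p" and "A \<subseteq> B"
  shows "sem T (V(Z := if b then A else B)) p \<subseteq> sem T (V(Z := if b then B else A)) p"
  using assms(1)
proof (induction p arbitrary: b V)
  case (FVar x)
  then show ?case using assms(2) by auto
next
  case (FNeg q)
  from FNeg.IH[of "\<not> b" V] FNeg.prems show ?case by (cases b) auto
next
  case (FAnd q r)
  from FAnd.IH[of b V] FAnd.prems show ?case by (cases b) auto
next
  case (FBox K q)
  from FBox.IH[of b V] FBox.prems show ?case by (cases b) auto
next
  case (FNu X q)
  show ?case
  proof (cases "X = Z")
    case False
    have "sem T ((V(X := S'))(Z := if b then A else B)) q
            \<subseteq> sem T ((V(X := S'))(Z := if b then B else A)) q" for S'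
      by (rule FNu.IH) (use FNu.prems False in simp)
    then have "sem T (V(Z := if b then A else B, X := S')) q
            \<subseteq> sem T (V(Z := if b then B else A, X := S')) q" for S'
      by (simp only: fun_upd_twist[OF False])
    then show ?thesis unfolding sem.simps(5) by blast
  qed (simp only: sem.simps(5) fun_upd_upd order_refl)
qed

lemma sem_mono:
  "positive Z p \<Longrightarrow> mono (\<lambda>X. sem T (V(Z := X)) p)"
  using sem_parity_mono[of True Z p] by (simp add: mono_def) blast

lemma sem_FNu_gfp: "sem T V (FNu Z p) = gfp (\<lambda>X. sem T (V(Z := X)) p)"
  by (simp add: gfp_def Sup_set_def)

lemma sem_subst:
  "\<forall>X\<in>bvars p. X \<noteq> Z \<longrightarrow> X \<notin> fvars t \<Longrightarrow>
   sem T V (subst p Z t) = sem T (V(Z := sem T V t)) p"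
proof (induction p arbitrary: V)
  case (FNu X q)
  show ?case
  proof (cases "X = Z")
    case False
    with FNu.prems have "X \<notin> fvars t" by simp
    then have "sem T (V(X := S')) t = sem T V t" for S'
      by (intro sem_cong_fvars) auto
    then have "sem T (V(X := S')) (subst q Z t) = sem T ((V(X := S'))(Z := sem T V t)) q" for S'
      using FNu.IH[of "V(X := S')"] FNu.prems False by (simp del: fun_upd_apply)
    then show ?thesis
      using False by (simp only: subst.simps sem.simps if_False fun_upd_twist[OF False])
  qed (simp only: subst.simps if_True simp_thms sem.simps(5) fun_upd_upd)
qed simp_all

lemma sem_FNeg_subst_FNeg:
  "sem T V (subst p Z (FNeg (FVar Z))) = sem T (V(Z := - V Z)) p"
  by (subst sem_subst) (auto simp: Compl_eq_Diff_UNIV)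

text \<open>Since \<open>f_mu\<close> is defined by negation, its fixed-point property comes from the greatest
  fixed point of the dual body.\<close>

lemma sem_FNu_unfold:
  assumes "positive Z p"
  shows "sem T V (FNu Z p) = sem T (V(Z := sem T V (FNu Z p))) p"
  unfolding sem_FNu_gfp by (rule gfp_unfold[OF sem_mono[OF assms]])

lemma sem_f_mu_unfold:
  assumes "wf_fm (f_mu Z p)"
  shows "sem T V (f_mu Z p) = sem T (V(Z := sem T V (f_mu Z p))) p"
proof -
  let ?G = "\<lambda>X. sem T (V(Z := X)) (FNeg (subst p Z (FNeg (FVar Z))))"
  let ?H = "\<lambda>X. - sem T (V(Z := - X)) p"
  have G_dual: "?G = ?H"
    by (simp add: fun_eq_iff sem_FNeg_subst_FNeg Compl_eq_Diff_UNIV)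
  have "mono ?G"
    using assms by (intro sem_mono) (simp add: f_mu_def)
  then have "mono ?H" unfolding G_dual .
  have "- gfp ?H = - ?H (gfp ?H)"
    using gfp_unfold[OF \<open>mono ?H\<close>] by (rule arg_cong)
  also have "\<dots> = sem T (V(Z := - gfp ?H)) p" by simp
  finally have fixpoint: "- gfp ?H = sem T (V(Z := - gfp ?H)) p" .
  have "sem T V (f_mu Z p) = - gfp ?G"
    unfolding f_mu_def sem.simps(2) sem_FNu_gfp by (rule Compl_eq_Diff_UNIV[symmetric])
  then have mu_dual: "sem T V (f_mu Z p) = - gfp ?H" unfolding G_dual .
  show ?thesis unfolding mu_dual by (rule fixpoint)
qed

lemma sem_fixpoint_unfold:
  assumes "phi = FNu Z p \<or> phi = f_mu Z p" and "wf_fm phi"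
  shows "sem T V phi = sem T (V(Z := sem T V phi)) p"
  using assms(1)
proof
  assume phi: "phi = FNu Z p"
  from assms(2) have "positive Z p" by (simp add: phi)
  then show ?thesis unfolding phi by (rule sem_FNu_unfold)
next
  assume phi: "phi = f_mu Z p"
  from assms(2) show ?thesis unfolding phi by (rule sem_f_mu_unfold)
qed

lemma bvars_subst: "bvars p \<subseteq> bvars (subst p Z t)"
  by (induction p) auto

lemma bvars_fixpoint_body:
  "phi = FNu Z p \<or> phi = f_mu Z p \<Longrightarrow> bvars p \<subseteq> bvars phi"
  using bvars_subst[of p Z "FNeg (FVar Z)"] by (auto simp: f_mu_def)

lemma ext_val_snoc:
  "ext_val T V (D @ [(U, p)]) = (ext_val T V D)(U := sem T (ext_val T V D) p)"
  by (induction D arbitrary: V) auto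

definition backward_refs :: "'a deflist \<Rightarrow> bool" where
  "backward_refs D \<longleftrightarrow>
     (\<forall>i<length D. \<forall>j<length D. i \<le> j \<longrightarrow> fst (D ! j) \<notin> fvars (snd (D ! i)))"

lemma backward_refs_snoc:
  "backward_refs (D @ [(U, q)]) \<longleftrightarrow>
     backward_refs D \<and> U \<notin> fvars q \<and> (\<forall>p\<in>snd ` set D. U \<notin> fvars p)"
  unfolding backward_refs_def
  by (auto simp: nth_append less_Suc_eq all_set_conv_all_nth)

lemma ext_val_lookup:
  assumes "distinct (map fst D)" and "backward_refs D" and "(U, phi) \<in> set D"
  shows "ext_val T V D U = sem T (ext_val T V D) phi"
  using assms
proof (induction D rule: rev_induct)
  case (snoc d D)
  obtain U' q' where d: "d = (U', q')" by (cases d)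
  with snoc.prems have "U' \<notin> fvars q'" and U'_not_earlier: "\<forall>p\<in>snd ` set D. U' \<notin> fvars p"
    by (simp_all add: backward_refs_snoc)
  show ?case
  proof (cases "(U, phi) \<in> set D")
    case True
    with snoc d have "ext_val T V D U = sem T (ext_val T V D) phi" and "U \<noteq> U'"
      by (force simp: backward_refs_snoc)+
    moreover have "U' \<notin> fvars phi" using U'_not_earlier True by force
    ultimately show ?thesis
      by (simp add: d ext_val_snoc) (intro sem_cong_fvars, auto)
  next
    case False
    with snoc.prems(3) d have "U = U'" "phi = q'" by auto
    with \<open>U' \<notin> fvars q'\<close> show ?thesis
      by (simp add: d ext_val_snoc) (intro sem_cong_fvars, auto)
  qed
qed simp

lemma sem_subst_defined_var:
  assumes wf: "wf_deflist D"
    and def: "map_of D U = Some phi" and fix_phi: "phi = FNu Z p \<or> phi = f_mu Z p"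
  shows "sem T (ext_val T V D) (subst p Z (FVar U)) = ext_val T V D U"
proof -
  let ?W = "ext_val T V D"
  have inD: "(U, phi) \<in> set D" using def by (rule map_of_SomeD)
  then obtain i where i: "i < length D" "D ! i = (U, phi)" by (auto simp: in_set_conv_nth)
  have "U \<notin> bvars phi" using wf i unfolding wf_deflist_def by (metis fst_conv snd_conv)
  then have "U \<notin> bvars p" using bvars_fixpoint_body[OF fix_phi] by blast
  have val_U: "?W U = sem T ?W phi"
    using wf inD by (intro ext_val_lookup) (auto simp: wf_deflist_def backward_refs_def)
  have "wf_fm phi" using wf inD unfolding wf_deflist_def by auto
  have "sem T ?W (subst p Z (FVar U)) = sem T (?W(Z := ?W U)) p"
    using \<open>U \<notin> bvars p\<close> by (subst sem_subst) auto
  also have "\<dots> = ?W U"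
    unfolding val_U by (rule sem_fixpoint_unfold[OF fix_phi \<open>wf_fm phi\<close>, symmetric])
  finally show ?thesis .
qed

lemma sem_f_or: "sem T V (f_or p q) = sem T V p \<union> sem T V q"
  by (auto simp: f_or_def)

lemma sem_f_dia: "sem T V (f_dia K p) = {s. \<exists>s'. stepK T s K s' \<and> s' \<in> sem T V p}"
  by (auto simp: f_dia_def)

lemma rule_inst_sound:
  assumes inst: "rule_inst T r (S, D, phi) prems" and "wf_deflist D"
    and prems_valid: "\<forall>sq\<in>set prems. valid_seq T V sq"
  shows "valid_seq T V (S, D, phi)"
proof (cases r)
  case RUn
  then obtain U Z p psi where "phi = FVar U" and "prems = [(S, D, subst p Z (FVar U))]"
    and "map_of D U = Some psi" and "psi = FNu Z p \<or> psi = f_mu Z p"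
    using inst by auto
  moreover from \<open>wf_deflist D\<close> this(3,4)
  have "sem T (ext_val T V D) (subst p Z (FVar U)) = ext_val T V D U"
    by (rule sem_subst_defined_var)
  ultimately show ?thesis using prems_valid by (simp add: valid_seq_def)
next
  case RAnd
  then show ?thesis using inst prems_valid by (auto simp: valid_seq_def)
next
  case ROr
  then show ?thesis using inst prems_valid by (auto simp: valid_seq_def sem_f_or)
next
  case RBox
  then show ?thesis using inst prems_valid by (clarsimp simp: valid_seq_def) blast
next
  case (RDia f)
  then show ?thesis using inst prems_valid by (clarsimp simp: valid_seq_def sem_f_dia) blast
next
  case RSigma
  then show ?thesis using inst prems_valid by (clarsimp simp: valid_seq_def ext_val_snoc) blast
next
  case RThin
  then show ?thesis using inst prems_valid by (clarsimp simp: valid_seq_def) blast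
qed

theorem lemma29:
  fixes T :: "('s, 'a) lts" and V :: "var \<Rightarrow> 's set"
    and t n :: "('s, 'a) tableau" and p :: "nat list"
  assumes "partial_tableau T t"
    and "node_at t p = Some n"
    and "internal n"
    and "\<forall>c \<in> set (children n). valid_node T V c"
  shows "valid_node T V n"
proof -
  obtain S D phi r cs where n: "n = Node (S, D, phi) (Some r) cs"
    using assms(3) unfolding internal_def by (metis rule_of.simps option.exhaust prod_cases3 tableau.exhaust)
  have "locally_ok T n" using assms(1,2) unfolding partial_tableau_def by blast
  then have "rule_inst T r (S, D, phi) (map label cs)" and "wf_deflist D"
    using n by (auto simp: is_sequent_def)
  moreover have "\<forall>sq\<in>set (map label cs). valid_seq T V sq"
    using assms(4) n by (auto simp: valid_node_def)
  ultimately have "valid_seq T V (S, D, phi)" by (rule rule_inst_sound)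
  then show ?thesis using n by (simp add: valid_node_def)
qed

end
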